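(* Assume (A1)–(A4) below, and let $\varepsilon_\diamond$, $\alpha$, $\mathcal{E}_n$ be as below. Let $\tilde\Omega$ be the set of $\omega\in\Omega$ for which there exists $n_\omega\in\mathbb{N}_+$ with $\omega\in\mathcal{E}_n$ for all $n>n_\omega$. Let $\mathbf{a}_\star$ be the unique solution of $\mathrm{VI}(\mathbb{A},\mathbb{F})$. For any $\omega\in\tilde\Omega$ and any neighborhood $\mathcal{N}$ of $\mathbf{a}_\star$, there exists $N_\omega\in\mathbb{N}_+$ such that for all $n\ge N_\omega$ the unique solution $\mathbf{a}_{\omega,n}$ of $\mathrm{VI}(A_{\omega,n},\mathbf{F}_{\omega,n})$ satisfies $\mathbf{a}_{\omega,n}\in\mathcal{N}$. In particular $\lim_{n\to\infty}\|\mathbf{a}_{\omega,n}-\mathbf{a}_\star\|_2=0$.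
   Context: Setting. $(\Omega,\mathcal{F},\mathbb{P})$ is a probability space; $N,d\in\mathbb{N}_+$, $R>0$, $\lambda>0$. $\mathcal{X}\subseteq\mathbb{R}^{n_x}$, $\mathcal{Y}\subseteq\mathbb{R}^{n_y}$ are compact; $X:\Omega\to\mathcal{X}$, $Y:\Omega\to\mathcal{Y}$ are random variables. $\phi_1,\dots,\phi_d$ are continuous on $\mathcal{X}$, $\Phi^d(x)=[\phi_l(x)]_{l=1}^d$. $\mathbb{B}_R=\{a\in\mathbb{R}^d:\|a\|_2<R\}$, $\operatorname{cl}\mathbb{B}_R$ its closure, $\operatorname{cl}\mathbb{B}_R^N=\prod_{i=1}^N\operatorname{cl}\mathbb{B}_R\subseteq\mathbb{R}^{Nd}$. A profile $\mathbf{a}=[a^1;\dots;a^N]$, $a^i\in\mathbb{R}^d$, defines $\hat z^i(x)=\sum_l a^i_l\phi_l(x)$ and $\hat z^{-i}(x)$ (stack over $j\neq i$). $\hat{\mathcal{Z}}^i=\bigcup\{\hat z^i(\mathcal{X}):a^i\in\operatorname{cl}\mathbb{B}_R\}$, $\hat{\mathcal{Z}}=\prod_i\hat{\mathcal{Z}}^i$. Player $i$ has objective $J^i(z^i;y,z^{-i})$ (derivative $\partial J^i$ in $z^i$) and constraint $h^i:\hat{\mathcal{Z}}^i\times\mathcal{Y}\to\mathbb{R}$. $F(z;y)=[\partial J^i(z^i;y,z^{-i})]_i$; $\mathbf{F}(\mathbf{a};x,y)=[\partial J^i(\hat z^i(x);y,\hat z^{-i}(x))\Phi^d(x)]_i\in\mathbb{R}^{Nd}$;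 $\mathbb{F}^0(\mathbf{a})=\mathbb{E}[\mathbf{F}(\mathbf{a};X,Y)]$, $\mathbb{F}(\mathbf{a})=\mathbb{F}^0(\mathbf{a})+\lambda\mathbf{a}$; $\mathbf{h}^i(a^i;x,y)=h^i(\hat z^i(x);y)$; $\bar h^i(a^i)=\mathbb{E}[\mathbf{h}^i(a^i;X,Y)]$. $(X^k,Y^k)_{k\ge1}$ are i.i.d. copies of $(X,Y)$ on $\Omega$; $\mathbf{F}_{\omega,n}(\mathbf{a})=\frac1n\sum_{k=1}^n\mathbf{F}(\mathbf{a};X^k(\omega),Y^k(\omega))+\lambda\mathbf{a}$, $\mathbf{h}^i_{\omega,n}(a^i)=\frac1n\sum_{k=1}^n\mathbf{h}^i(a^i;X^k(\omega),Y^k(\omega))$. For $\varepsilon\in\mathbb{R}$: $\mathbb{A}^i_\varepsilon=\{a^i\in\operatorname{cl}\mathbb{B}_R:\bar h^i(a^i)\le\varepsilon\}$, $\mathbb{A}_\varepsilon=\prod_i\mathbb{A}^i_\varepsilon$, $\mathbb{A}=\mathbb{A}_0$; $A^i_{\omega,n}=\{a^i\in\operatorname{cl}\mathbb{B}_R:\mathbf{h}^i_{\omega,n}(a^i)\le0\}$, $A_{\omega,n}=\prod_iA^i_{\omega,n}$. For a closed convex set $K\subseteq\mathbb{R}^{Nd}$ and $G:\mathbb{R}^{Nd}\to\mathbb{R}^{Nd}$, $\mathrm{VI}(K,G)$ asks for $\mathbf{a}^*\in K$ with $\langle G(\mathbf{a}^* ),\mathbf{a}-\mathbf{a}^*\rangle\ge0$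 for all $\mathbf{a}\in K$. (A1) Each $J^i(\cdot;y,z^{-i})$ is continuously differentiable. (A2) For all $y$, $F(\cdot;y)$ is $L_F$-Lipschitz on $\hat{\mathcal{Z}}$ and each $h^i(\cdot;y)$ is $L_h$-Lipschitz on $\hat{\mathcal{Z}}^i$; some $z\in\hat{\mathcal{Z}}$ has $F(z;\mathcal{Y})$ and all $h^i(z^i;\mathcal{Y})$ bounded. (A3) For every $y$, $F(\cdot;y)$ is monotone on $\hat{\mathcal{Z}}$ ($\langle F(z_1;y)-F(z_2;y),z_1-z_2\rangle\ge0$) and each $h^i(\cdot;y)$ is convex on $\hat{\mathcal{Z}}^i$. (A4) There is $\varepsilon_h>0$ with $\{a^i\in\operatorname{cl}\mathbb{B}_R:\bar h^i(a^i)\le-\varepsilon_h\}\ne\varnothing$ for every $i$. The constant $\varepsilon_\diamond\in(0,\varepsilon_h)$: for every $\mathbf{a}\in\operatorname{cl}\mathbb{B}_R^N$, each centered random variable $W$ of the form $[\mathbf{F}(\mathbf{a};X,Y)]_l-[\mathbb{F}^0(\mathbf{a})]_l$ or $\mathbf{h}^i(a^i;X,Y)-\bar h^i(a^i)$, with variance $\sigma^2$, has rate function $I(u)=\sup_t\{tu-\log\mathbb{E}[e^{tW}]\}$ satisfying $I(u)\ge u^2/(3\sigma^2)$ for $0<u\le\varepsilon_\diamond$. Fix $0<\alpha<1/2$, $\varepsilon_n=\varepsilon_\diamond n^{-\alpha}$, and $\mathcal{E}_n=\{\omega:\|\mathbf{F}_{\omega,n}(\mathbf{a})-\mathbb{F}(\mathbf{a})\|_2<\varepsilon_n\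 \forall\mathbf{a}\in\operatorname{cl}\mathbb{B}_R^N\}\cap\{\omega:\mathbb{A}_{-\varepsilon_n}\subseteq A_{\omega,n}\subseteq\mathbb{A}_{\varepsilon_n}\}$. *)

theory Defs
  imports "HOL-Probability.Probability"
begin

definition Phi :: "('d::finite \<Rightarrow> 'x \<Rightarrow> real) \<Rightarrow> 'x \<Rightarrow> real^'d" where
  "Phi \<phi> x = (\<chi> l. \<phi> l x)"

definition zhat :: "('d::finite \<Rightarrow> 'x \<Rightarrow> real) \<Rightarrow> real^'d^'N \<Rightarrow> 'x \<Rightarrow> real^'N" where
  "zhat \<phi> a x = (\<chi> i. a$i \<bullet> Phi \<phi> x)"

definition Zhat_i :: "('d::finite \<Rightarrow> 'x \<Rightarrow> real) \<Rightarrow> 'x set \<Rightarrow> real \<Rightarrow> real set" where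
  "Zhat_i \<phi> \<X> R = {c \<bullet> Phi \<phi> x | c x. c \<in> cball 0 R \<and> x \<in> \<X>}"

definition Zhat :: "('d::finite \<Rightarrow> 'x \<Rightarrow> real) \<Rightarrow> 'x set \<Rightarrow> real \<Rightarrow> (real^'N) set" where
  "Zhat \<phi> \<X> R = {z. \<forall>i. z$i \<in> Zhat_i \<phi> \<X> R}"

definition clBN :: "real \<Rightarrow> (real^'d^'N) set" where
  "clBN R = {a. \<forall>i. a$i \<in> cball 0 R}"

definition Fz :: "('N \<Rightarrow> real^'N \<Rightarrow> 'y \<Rightarrow> real) \<Rightarrow> real^'N \<Rightarrow> 'y \<Rightarrow> real^'N" where
  "Fz dJ z y = (\<chi> i. dJ i z y)"

definition Fb :: "('d::finite \<Rightarrow> 'x \<Rightarrow> real) \<Rightarrow> ('N::finite \<Rightarrow> real^'N \<Rightarrow> 'y \<Rightarrow> real)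
    \<Rightarrow> real^'d^'N \<Rightarrow> 'x \<Rightarrow> 'y \<Rightarrow> real^'d^'N" where
  "Fb \<phi> dJ a x y = (\<chi> i. dJ i (zhat \<phi> a x) y *\<^sub>R Phi \<phi> x)"

definition hb :: "('d::finite \<Rightarrow> 'x \<Rightarrow> real) \<Rightarrow> ('N \<Rightarrow> real \<Rightarrow> 'y \<Rightarrow> real)
    \<Rightarrow> 'N \<Rightarrow> real^'d \<Rightarrow> 'x \<Rightarrow> 'y \<Rightarrow> real" where
  "hb \<phi> h i c x y = h i (c \<bullet> Phi \<phi> x) y"

definition vupd :: "real^'N \<Rightarrow> 'N \<Rightarrow> real \<Rightarrow> real^'N" where
  "vupd z i t = (\<chi> j. if j = i then t else z$j)"

definition isVI :: "('a::real_inner) set \<Rightarrow> ('a \<Rightarrow> 'a) \<Rightarrow> 'a \<Rightarrow> bool" where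
  "isVI K G a \<longleftrightarrow> a \<in> K \<and> (\<forall>b\<in>K. G a \<bullet> (b - a) \<ge> 0)"

text \<open>Cramer rate function I(u) = sup_t (t u - log E[exp(t W)]); a value t with
  E[exp(tW)] = +infinity contributes -infinity.\<close>
definition rate_fun :: "'a measure \<Rightarrow> ('a \<Rightarrow> real) \<Rightarrow> real \<Rightarrow> ereal" where
  "rate_fun M W u = (SUP t\<in>UNIV. if integrable M (\<lambda>\<omega>. exp (t * W \<omega>))
      then ereal (t * u - ln (integral\<^sup>L M (\<lambda>\<omega>. exp (t * W \<omega>)))) else -\<infinity>)"

end

theory Submission
  imports Defs
begin

(* On the event E_n the sample problem VI(A_{omega,n}, F_{omega,n}) is a perturbation of size
   eps_n of VI(A, F): the operators differ by less than eps_n on cl B_R^N and the feasible set is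
   squeezed between the sublevel sets A_{-eps_n} and A_{eps_n} of the convex expected constraints.
   Both operators are lambda-strongly monotone, and the sample feasible set is compact and convex,
   so each problem has exactly one solution.  Moving either solution the fraction eps_n / eps_h
   of the way towards a Slater point (expected constraints at most -eps_h) makes it feasible for
   the other problem, and testing the two variational inequalities at these points gives
   lambda |a_{omega,n} - a_star|^2 <= K eps_n.  Since eps_n -> 0 this yields convergence along
   every omega in Omega_t.  The argument is pathwise and works with dJ directly. *)

definition strongly_monotone_on :: "real \<Rightarrow> 'a::real_inner set \<Rightarrow> ('a \<Rightarrow> 'a) \<Rightarrow> bool" where
  "strongly_monotone_on \<mu> K G \<longleftrightarrow> (\<forall>a\<in>K. \<forall>b\<in>K. \<mu> * (norm (a - b))\<^sup>2 \<le> (G a - G b) \<bullet> (a - b))"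

lemma isVI_exists:
  fixes G :: "'a::euclidean_space \<Rightarrow> 'a"
  assumes K: "compact K" "convex K" "K \<noteq> {}" and G: "continuous_on K G"
  shows "\<exists>a. isVI K G a"
proof -
  have "closed K" using K(1) by (rule compact_imp_closed)
  let ?p = "\<lambda>a. closest_point K (a - G a)"
  have "continuous_on K ?p"
    by (intro continuous_on_compose2[OF continuous_on_closest_point[OF K(2) \<open>closed K\<close> K(3)]]
        continuous_intros G) auto
  moreover have "?p \<in> K \<rightarrow> K" using closest_point_in_set[OF \<open>closed K\<close> K(3)] by blast
  ultimately obtain a where a: "a \<in> K" "?p a = a"
    using brouwer[OF K] by blast
  \<comment> \<open>a fixed point of the projected gradient step solves the VI\<close>
  have "G a \<bullet> (b - a) \<ge> 0" if "b \<in> K" for b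
    using closest_point_dot[OF K(2) \<open>closed K\<close> that, of "a - G a"] a(2)
    by (simp add: inner_diff_left)
  then show ?thesis using a(1) unfolding isVI_def by blast
qed

lemma isVI_unique:
  assumes G: "strongly_monotone_on \<mu> K G" and \<mu>: "0 < \<mu>"
    and a: "isVI K G a" and b: "isVI K G b"
  shows "a = b"
proof -
  have "\<mu> * (norm (a - b))\<^sup>2 \<le> (G a - G b) \<bullet> (a - b)"
    using G a b unfolding strongly_monotone_on_def isVI_def by blast
  also have "\<dots> = - (G a \<bullet> (b - a)) - G b \<bullet> (a - b)"
    by (simp add: inner_diff_left inner_diff_right)
  also have "\<dots> \<le> 0" using a b unfolding isVI_def by fastforce
  finally show ?thesis using \<mu> by (simp add: mult_le_0_iff)
qed

lemma isVI_perturbation_bound: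
  fixes a a' s :: "'a::real_inner"
  assumes a: "isVI K G a" and a': "isVI K' G' a'"
    and "(1 - t) *\<^sub>R a' + t *\<^sub>R s \<in> K" and "(1 - t) *\<^sub>R a + t *\<^sub>R s \<in> K'"
    and sm: "\<mu> * (norm (a - a'))\<^sup>2 \<le> (G a - G a') \<bullet> (a - a')"
    and C: "norm (G a) \<le> C" and e: "norm (G a' - G' a') \<le> e"
    and D: "norm (a - a') \<le> D" "norm (s - a') \<le> D" "norm (s - a) \<le> D"
    and t: "0 \<le> t"
  shows "\<mu> * (norm (a - a'))\<^sup>2 \<le> t * D * C + t * D * norm (G' a') + e * D"
proof -
  define b where "b = (1 - t) *\<^sub>R a' + t *\<^sub>R s"
  define c where "c = (1 - t) *\<^sub>R a + t *\<^sub>R s"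
  have "G a \<bullet> (b - a) \<ge> 0" "G' a' \<bullet> (c - a') \<ge> 0"
    using assms(3,4) a a' unfolding isVI_def b_def c_def by auto
  have b: "b - a' = t *\<^sub>R (s - a')" and c: "a - c = - (t *\<^sub>R (s - a))"
    unfolding b_def c_def by (simp_all add: algebra_simps)
  have "0 \<le> C" "0 \<le> e" using C e norm_ge_zero order_trans by blast+
  have "G a \<bullet> (a - a') \<le> G a \<bullet> (b - a')"
    using \<open>G a \<bullet> (b - a) \<ge> 0\<close> by (simp add: inner_diff_right)
  also have "\<dots> \<le> norm (G a) * (t * norm (s - a'))"
    using norm_cauchy_schwarz[of "G a" "b - a'"] t by (simp add: b)
  also have "\<dots> \<le> C * (t * D)"
    using C D(2) t \<open>0 \<le> C\<close> by (intro mult_mono mult_left_mono) auto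
  finally have upper: "G a \<bullet> (a - a') \<le> t * D * C" by (simp add: mult_ac)
  have "- (G a' \<bullet> (a - a')) = (G' a' - G a') \<bullet> (a - a') - G' a' \<bullet> (a - c) - G' a' \<bullet> (c - a')"
    by (simp add: inner_diff_left inner_diff_right)
  also have "\<dots> \<le> norm (G' a' - G a') * norm (a - a') + norm (G' a') * norm (a - c)"
    using norm_cauchy_schwarz[of "G' a' - G a'" "a - a'"] norm_cauchy_schwarz[of "G' a'" "c - a"]
      \<open>G' a' \<bullet> (c - a') \<ge> 0\<close> by (simp add: inner_diff_right norm_minus_commute)
  also have "\<dots> \<le> e * D + norm (G' a') * (t * D)"
    using e D(1,3) t \<open>0 \<le> e\<close> by (intro add_mono mult_mono mult_left_mono)
      (auto simp: c norm_minus_commute intro: mult_left_mono)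
  finally have lower: "- (G a' \<bullet> (a - a')) \<le> e * D + t * D * norm (G' a')"
    by (simp add: mult_ac)
  show ?thesis using sm upper lower by (simp add: inner_diff_left)
qed

definition prod_sublevel :: "('i::finite \<Rightarrow> real^'d \<Rightarrow> real) \<Rightarrow> real \<Rightarrow> real \<Rightarrow> (real^'d^'i) set" where
  "prod_sublevel g R e = {a. \<forall>i. a$i \<in> cball 0 R \<and> g i (a$i) \<le> e}"

lemma prod_sublevel_subset_clBN: "prod_sublevel g R e \<subseteq> clBN R"
  unfolding prod_sublevel_def clBN_def by auto

lemma prod_sublevel_mono: "e \<le> e' \<Longrightarrow> prod_sublevel g R e \<subseteq> prod_sublevel g R e'"
  unfolding prod_sublevel_def by (auto intro: order_trans)

lemma norm_le_of_mem_clBN: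
  fixes a :: "real^'d^'i" and R :: real
  assumes "a \<in> clBN R"
  shows "norm a \<le> real CARD('i) * R"
proof -
  have "norm a \<le> (\<Sum>i\<in>UNIV. norm (a$i))" by (simp add: norm_vec_def L2_set_le_sum)
  also have "\<dots> \<le> (\<Sum>i\<in>(UNIV::'i set). R)" using assms unfolding clBN_def by (intro sum_mono) simp
  finally show ?thesis by simp
qed

lemma norm_diff_le_of_mem_clBN:
  fixes a b :: "real^'d^'i" and R :: real
  assumes "a \<in> clBN R" "b \<in> clBN R"
  shows "norm (a - b) \<le> 2 * real CARD('i) * R"
  using norm_le_of_mem_clBN[OF assms(1)] norm_le_of_mem_clBN[OF assms(2)] norm_triangle_ineq4[of a b]
  by linarith

lemma convex_combination_in_prod_sublevel:
  assumes g: "\<forall>i. convex_on (cball 0 R) (g i)"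
    and a: "a \<in> prod_sublevel g R u" and b: "b \<in> prod_sublevel g R v"
    and t: "0 \<le> t" "t \<le> 1"
  shows "(1 - t) *\<^sub>R a + t *\<^sub>R b \<in> prod_sublevel g R ((1 - t) * u + t * v)"
  unfolding prod_sublevel_def
proof (intro CollectI allI conjI)
  fix i
  have ai: "a$i \<in> cball 0 R" "g i (a$i) \<le> u" and bi: "b$i \<in> cball 0 R" "g i (b$i) \<le> v"
    using a b unfolding prod_sublevel_def by auto
  show "((1 - t) *\<^sub>R a + t *\<^sub>R b) $ i \<in> cball 0 R"
    using convexD_alt[OF convex_cball ai(1) bi(1) t] by simp
  have "g i (((1 - t) *\<^sub>R a + t *\<^sub>R b) $ i) \<le> (1 - t) * g i (a$i) + t * g i (b$i)"
    using convex_onD[OF g[rule_format] t ai(1) bi(1)] by simp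
  also have "\<dots> \<le> (1 - t) * u + t * v"
    using ai(2) bi(2) t by (intro add_mono mult_left_mono) auto
  finally show "g i (((1 - t) *\<^sub>R a + t *\<^sub>R b) $ i) \<le> (1 - t) * u + t * v" .
qed

lemma convex_prod_sublevel:
  assumes "\<forall>i. convex_on (cball 0 R) (g i)"
  shows "convex (prod_sublevel g R e)"
  unfolding convex_alt
  using convex_combination_in_prod_sublevel[OF assms, of _ e _ e] by (simp add: algebra_simps)

lemma compact_prod_sublevel:
  assumes "\<forall>i. continuous_on (cball 0 R) (g i)"
  shows "compact (prod_sublevel g R e)"
proof -
  have "closed ((\<lambda>a. a$i) -` (cball 0 R \<inter> g i -` {..e}))" for i
    by (intro continuous_closed_vimage continuous_intros
        continuous_closed_preimage[OF assms[rule_format] closed_cball closed_atMost])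
  then have "closed (prod_sublevel g R e)"
    unfolding prod_sublevel_def by (simp add: vimage_def Collect_all_eq closed_INT)
  moreover have "bounded (prod_sublevel g R e)"
    using norm_le_of_mem_clBN prod_sublevel_subset_clBN unfolding bounded_iff by blast
  ultimately show ?thesis by (simp add: compact_eq_bounded_closed)
qed

lemma prod_sublevel_nonempty:
  assumes "\<forall>i. {c \<in> cball 0 R. g i c \<le> e} \<noteq> {}"
  shows "prod_sublevel g R e \<noteq> {}"
proof -
  have "\<forall>i. \<exists>c. c \<in> cball 0 R \<and> g i c \<le> e" using assms by blast
  then obtain c where "\<forall>i. c i \<in> cball 0 R \<and> g i (c i) \<le> e" by metis
  then have "(\<chi> i. c i) \<in> prod_sublevel g R e" by (simp add: prod_sublevel_def)
  then show ?thesis by blast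
qed

lemma isVI_prod_sublevel_ex1:
  assumes "\<forall>i. convex_on (cball 0 R) (g i)" "\<forall>i. continuous_on (cball 0 R) (g i)"
    and "prod_sublevel g R e \<noteq> {}"
    and "continuous_on (clBN R) G" "strongly_monotone_on \<mu> (clBN R) G" "0 < \<mu>"
  shows "\<exists>!a. isVI (prod_sublevel g R e) G a"
proof -
  have "strongly_monotone_on \<mu> (prod_sublevel g R e) G"
    using assms(5) prod_sublevel_subset_clBN unfolding strongly_monotone_on_def by blast
  then show ?thesis
    using isVI_exists[OF compact_prod_sublevel convex_prod_sublevel assms(3)]
      continuous_on_subset[OF assms(4) prod_sublevel_subset_clBN] isVI_unique assms
    by metis
qed

lemma isVI_prod_sublevel_perturbation_bound:
  fixes g :: "'i::finite \<Rightarrow> real^'d \<Rightarrow> real" and a a' s :: "real^'d^'i" and R :: real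
  assumes g: "\<forall>i. convex_on (cball 0 R) (g i)"
    and s: "s \<in> prod_sublevel g R (- eh)" and e: "0 < e" "e \<le> eh"
    and K: "prod_sublevel g R (- e) \<subseteq> K" "K \<subseteq> prod_sublevel g R e"
    and a: "isVI K G a" and a': "isVI (prod_sublevel g R 0) G' a'"
    and G: "strongly_monotone_on \<mu> (clBN R) G" "\<forall>b\<in>clBN R. norm (G b) \<le> C"
    and close: "norm (G a' - G' a') \<le> e"
  shows "\<mu> * (norm (a - a'))\<^sup>2 \<le> e * (2 * real CARD('i) * R) * ((C + norm (G' a')) / eh + 1)"
proof -
  define t where "t = e / eh"
  define D where "D = 2 * real CARD('i) * R"
  have t: "0 \<le> t" "t \<le> 1" "t * eh = e" using e unfolding t_def by auto
  have a_in: "a \<in> prod_sublevel g R e" and a'_in: "a' \<in> prod_sublevel g R 0"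
    using a a' K(2) unfolding isVI_def by auto
  have "(1 - t) *\<^sub>R a' + t *\<^sub>R s \<in> prod_sublevel g R ((1 - t) * 0 + t * - eh)"
    by (rule convex_combination_in_prod_sublevel[OF g a'_in s t(1,2)])
  then have b: "(1 - t) *\<^sub>R a' + t *\<^sub>R s \<in> K" using K(1) t(3) by auto
  have "(1 - t) *\<^sub>R a + t *\<^sub>R s \<in> prod_sublevel g R ((1 - t) * e + t * - eh)"
    by (rule convex_combination_in_prod_sublevel[OF g a_in s t(1,2)])
  moreover have "(1 - t) * e + t * - eh \<le> 0" using t e by (simp add: algebra_simps)
  ultimately have c: "(1 - t) *\<^sub>R a + t *\<^sub>R s \<in> prod_sublevel g R 0"
    using prod_sublevel_mono by blast
  have cl: "a \<in> clBN R" "a' \<in> clBN R" "s \<in> clBN R"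
    using a_in a'_in s prod_sublevel_subset_clBN by blast+
  have "\<mu> * (norm (a - a'))\<^sup>2 \<le> t * D * C + t * D * norm (G' a') + e * D"
    using isVI_perturbation_bound[OF a a' b c] G cl close t(1)
    unfolding strongly_monotone_on_def D_def by (simp add: norm_diff_le_of_mem_clBN)
  also have "\<dots> = e * D * ((C + norm (G' a')) / eh + 1)"
    using e unfolding t_def by (simp add: field_simps)
  finally show ?thesis unfolding D_def .
qed

lemma compact_Phi_image:
  assumes "compact \<X>" "\<forall>l. continuous_on \<X> (\<phi> l)"
  shows "compact (Phi \<phi> ` \<X>)"
  using assms unfolding Phi_def[abs_def]
  by (intro compact_continuous_image continuous_on_vec_lambda) auto

lemma inner_Phi_mem_Zhat_i: "c \<in> cball 0 R \<Longrightarrow> x \<in> \<X> \<Longrightarrow> c \<bullet> Phi \<phi> x \<in> Zhat_i \<phi> \<X> R"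
  unfolding Zhat_i_def by blast

lemma zhat_mem_Zhat: "a \<in> clBN R \<Longrightarrow> x \<in> \<X> \<Longrightarrow> zhat \<phi> a x \<in> Zhat \<phi> \<X> R"
  unfolding Zhat_def zhat_def clBN_def by (auto intro: inner_Phi_mem_Zhat_i)

lemma bounded_Zhat:
  assumes "compact \<X>" "\<forall>l. continuous_on \<X> (\<phi> l)"
  shows "bounded (Zhat \<phi> \<X> R :: (real^'N) set)"
proof -
  obtain P where P: "\<forall>x\<in>\<X>. norm (Phi \<phi> x) \<le> P"
    using compact_imp_bounded[OF compact_Phi_image[OF assms]] unfolding bounded_iff by blast
  have "\<bar>t\<bar> \<le> R * P" if t: "t \<in> Zhat_i \<phi> \<X> R" for t
  proof -
    obtain c x where "t = c \<bullet> Phi \<phi> x" "c \<in> cball 0 R" "x \<in> \<X>"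
      using t unfolding Zhat_i_def by blast
    moreover have "norm c * norm (Phi \<phi> x) \<le> R * P"
      using P \<open>c \<in> cball 0 R\<close> \<open>x \<in> \<X>\<close> by (intro mult_mono) (auto intro: order_trans[OF norm_ge_zero])
    ultimately show ?thesis using Cauchy_Schwarz_ineq2[of c "Phi \<phi> x"] by simp
  qed
  then have "norm z \<le> real CARD('N) * (R * P)" if "z \<in> Zhat \<phi> \<X> R" for z :: "real^'N"
    using that norm_le_l1_cart[of z] sum_mono[of UNIV "\<lambda>i. \<bar>z$i\<bar>" "\<lambda>_. R * P"]
    unfolding Zhat_def by fastforce
  then show ?thesis unfolding bounded_iff by blast
qed

lemma uniformly_lipschitz_bounded:
  fixes f :: "'a::metric_space \<Rightarrow> 'y \<Rightarrow> 'b::real_normed_vector"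
  assumes lip: "\<forall>y\<in>Y. lipschitz_on L S (\<lambda>z. f z y)" and S: "bounded S" "z\<^sub>0 \<in> S"
    and bdd: "bounded ((\<lambda>y. f z\<^sub>0 y) ` Y)"
  shows "\<exists>B. \<forall>z\<in>S. \<forall>y\<in>Y. norm (f z y) \<le> B"
proof -
  obtain r where r: "\<forall>z\<in>S. dist z z\<^sub>0 \<le> r"
    using S(1) unfolding bounded_any_center[of _ z\<^sub>0] by (auto simp: dist_commute)
  obtain B where B: "\<forall>y\<in>Y. norm (f z\<^sub>0 y) \<le> B" using bdd unfolding bounded_iff by blast
  have "norm (f z y) \<le> B + L * r" if "z \<in> S" "y \<in> Y" for z y
  proof -
    have "norm (f z y) \<le> norm (f z\<^sub>0 y) + dist (f z y) (f z\<^sub>0 y)"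
      using norm_triangle_sub[of "f z y" "f z\<^sub>0 y"] by (simp add: dist_norm)
    also have "\<dots> \<le> B + L * dist z z\<^sub>0"
      using B lipschitz_onD[of L S "\<lambda>z. f z y" z z\<^sub>0] lip S(2) that by (intro add_mono) auto
    also have "\<dots> \<le> B + L * r"
      using r lip that lipschitz_on_nonneg by (intro add_left_mono mult_left_mono) blast+
    finally show ?thesis .
  qed
  then show ?thesis by blast
qed

lemma norm_Fb: "norm (Fb \<phi> dJ a x y) = norm (Fz dJ (zhat \<phi> a x) y) * norm (Phi \<phi> x)"
  by (simp add: norm_vec_def Fb_def Fz_def abs_mult L2_set_left_distrib flip: L2_set_right_distrib)

lemma bounded_Fb:
  fixes dJ :: "'N::finite \<Rightarrow> real^'N \<Rightarrow> 'y \<Rightarrow> real" and \<phi> :: "'d::finite \<Rightarrow> 'x::topological_space \<Rightarrow> real"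
  assumes "compact \<X>" "\<forall>l. continuous_on \<X> (\<phi> l)"
    and lip: "\<forall>y\<in>\<Y>. lipschitz_on L (Zhat \<phi> \<X> R) (\<lambda>z. Fz dJ z y)"
    and bdd: "\<exists>z\<in>Zhat \<phi> \<X> R. bounded ((\<lambda>y. Fz dJ z y) ` \<Y>)"
  shows "\<exists>B. \<forall>a\<in>clBN R. \<forall>x\<in>\<X>. \<forall>y\<in>\<Y>. norm (Fb \<phi> dJ a x y) \<le> B"
proof -
  obtain B where B: "\<forall>z\<in>Zhat \<phi> \<X> R. \<forall>y\<in>\<Y>. norm (Fz dJ z y) \<le> B"
    using bdd uniformly_lipschitz_bounded[OF lip bounded_Zhat[OF assms(1,2)]] by blast
  obtain P where P: "\<forall>x\<in>\<X>. norm (Phi \<phi> x) \<le> P"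
    using compact_imp_bounded[OF compact_Phi_image[OF assms(1,2)]] unfolding bounded_iff by blast
  have "norm (Fb \<phi> dJ a x y) \<le> B * P" if "a \<in> clBN R" "x \<in> \<X>" "y \<in> \<Y>" for a x y
    unfolding norm_Fb using B P zhat_mem_Zhat[OF that(1,2)] that(2,3)
    by (intro mult_mono) (auto intro: order_trans[OF norm_ge_zero])
  then show ?thesis by blast
qed

lemma inner_Fb_diff:
  "(Fb \<phi> dJ a x y - Fb \<phi> dJ b x y) \<bullet> (a - b)
   = (Fz dJ (zhat \<phi> a x) y - Fz dJ (zhat \<phi> b x) y) \<bullet> (zhat \<phi> a x - zhat \<phi> b x)"
proof -
  have "(Fb \<phi> dJ a x y - Fb \<phi> dJ b x y) $ i \<bullet> (a - b) $ i
     = (Fz dJ (zhat \<phi> a x) y - Fz dJ (zhat \<phi> b x) y) $ i * (zhat \<phi> a x - zhat \<phi> b x) $ i" for i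
    by (simp add: Fb_def Fz_def zhat_def inner_diff_left inner_diff_right inner_commute
        scaleR_diff_left left_diff_distrib)
  then show ?thesis
    unfolding inner_vec_def[of "Fb \<phi> dJ a x y - Fb \<phi> dJ b x y"]
      inner_vec_def[of "Fz dJ (zhat \<phi> a x) y - Fz dJ (zhat \<phi> b x) y"] by simp
qed

lemma monotone_Fb:
  assumes "x \<in> \<X>"
    and "\<forall>z1\<in>Zhat \<phi> \<X> R. \<forall>z2\<in>Zhat \<phi> \<X> R. (Fz dJ z1 y - Fz dJ z2 y) \<bullet> (z1 - z2) \<ge> 0"
  shows "strongly_monotone_on 0 (clBN R) (\<lambda>a. Fb \<phi> dJ a x y)"
  unfolding strongly_monotone_on_def inner_Fb_diff
  by (simp add: assms(2) zhat_mem_Zhat[OF _ assms(1)])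

lemma continuous_on_zhat: "continuous_on S (\<lambda>a. zhat \<phi> a x)"
  unfolding zhat_def by (intro continuous_intros)

lemma continuous_on_Fb:
  assumes "x \<in> \<X>" "lipschitz_on L (Zhat \<phi> \<X> R) (\<lambda>z. Fz dJ z y)"
  shows "continuous_on (clBN R) (\<lambda>a. Fb \<phi> dJ a x y)"
proof -
  have "continuous_on (clBN R) (\<lambda>a. Fz dJ (zhat \<phi> a x) y)"
    using assms zhat_mem_Zhat
    by (intro continuous_on_compose2[OF lipschitz_on_continuous_on continuous_on_zhat]) auto
  then have "continuous_on (clBN R) (\<lambda>a. \<chi> i. Fz dJ (zhat \<phi> a x) y $ i *\<^sub>R Phi \<phi> x)"
    by (intro continuous_on_vec_lambda continuous_on_scaleR continuous_on_component continuous_on_const)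
  then show ?thesis by (simp add: Fb_def Fz_def)
qed

lemma continuous_on_hb:
  assumes "x \<in> \<X>" "lipschitz_on L (Zhat_i \<phi> \<X> R) (\<lambda>t. h i t y)"
  shows "continuous_on (cball 0 R) (\<lambda>c. hb \<phi> h i c x y)"
  unfolding hb_def
  by (rule continuous_on_compose2[OF lipschitz_on_continuous_on[OF assms(2)]])
    (auto intro: continuous_intros inner_Phi_mem_Zhat_i assms(1))

lemma convex_on_hb:
  fixes \<phi> :: "'d::finite \<Rightarrow> 'x \<Rightarrow> real"
  assumes x: "x \<in> \<X>" and h: "convex_on (Zhat_i \<phi> \<X> R) (\<lambda>t. h i t y)"
  shows "convex_on (cball 0 R) (\<lambda>c. hb \<phi> h i c x y)"
proof (rule convex_onI[OF _ convex_cball])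
  fix c d :: "real^'d" and t :: real
  assume "0 < t" "t < 1" and cd: "c \<in> cball 0 R" "d \<in> cball 0 R"
  then show "hb \<phi> h i ((1 - t) *\<^sub>R c + t *\<^sub>R d) x y \<le> (1 - t) * hb \<phi> h i c x y + t * hb \<phi> h i d x y"
    using convex_onD[OF h, of t "c \<bullet> Phi \<phi> x" "d \<bullet> Phi \<phi> x"]
      inner_Phi_mem_Zhat_i[OF cd(1) x] inner_Phi_mem_Zhat_i[OF cd(2) x]
    by (simp add: hb_def inner_add_left)
qed

lemma convex_on_sum_fun:
  assumes "convex C" "\<forall>k\<in>I. convex_on C (f k)"
  shows "convex_on C (\<lambda>x. \<Sum>k\<in>I. f k x)"
proof (cases "finite I")
  case True
  then show ?thesis using assms(2)
  proof (induction I rule: finite_induct)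
    case empty
    then show ?case using assms(1) by (simp add: convex_on_const)
  next
    case (insert k I)
    then show ?case by (simp add: convex_on_add)
  qed
qed (simp add: convex_on_const assms(1))

lemma convex_on_integral:
  assumes C: "convex C" and int: "\<forall>c\<in>C. integrable M (f c)"
    and conv: "\<forall>\<omega>\<in>space M. convex_on C (\<lambda>c. f c \<omega>)"
  shows "convex_on C (\<lambda>c. integral\<^sup>L M (f c))"
proof (rule convex_onI[OF _ C])
  fix t :: real and c d
  assume t: "0 < t" "t < 1" and cd: "c \<in> C" "d \<in> C"
  then have "(1 - t) *\<^sub>R c + t *\<^sub>R d \<in> C" using C by (simp add: convexD_alt)
  have "f ((1 - t) *\<^sub>R c + t *\<^sub>R d) \<omega> \<le> (1 - t) * f c \<omega> + t * f d \<omega>" if "\<omega> \<in> space M" for \<omega>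
    using convex_onD[OF conv[rule_format, OF that], of t c d] t cd by simp
  with \<open>(1 - t) *\<^sub>R c + t *\<^sub>R d \<in> C\<close>
  have "integral\<^sup>L M (f ((1 - t) *\<^sub>R c + t *\<^sub>R d))
      \<le> integral\<^sup>L M (\<lambda>\<omega>. (1 - t) * f c \<omega> + t * f d \<omega>)"
    using int cd by (intro integral_mono) auto
  also have "\<dots> = (1 - t) * integral\<^sup>L M (f c) + t * integral\<^sup>L M (f d)"
    using int cd by simp
  finally show "integral\<^sup>L M (f ((1 - t) *\<^sub>R c + t *\<^sub>R d))
      \<le> (1 - t) * integral\<^sup>L M (f c) + t * integral\<^sup>L M (f d)" .
qed

lemma strongly_monotone_on_regularized_sum:
  assumes "\<forall>k\<in>I. strongly_monotone_on 0 K (f k)" "0 \<le> c"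
  shows "strongly_monotone_on \<mu> K (\<lambda>a. c *\<^sub>R (\<Sum>k\<in>I. f k a) + \<mu> *\<^sub>R a)"
  unfolding strongly_monotone_on_def
proof (intro ballI)
  fix a b assume "a \<in> K" "b \<in> K"
  then have "0 \<le> c * (\<Sum>k\<in>I. (f k a - f k b) \<bullet> (a - b))"
    using assms unfolding strongly_monotone_on_def by (simp add: sum_nonneg)
  moreover have "c *\<^sub>R (\<Sum>k\<in>I. f k a) + \<mu> *\<^sub>R a - (c *\<^sub>R (\<Sum>k\<in>I. f k b) + \<mu> *\<^sub>R b)
      = c *\<^sub>R (\<Sum>k\<in>I. f k a - f k b) + \<mu> *\<^sub>R (a - b)"
    by (simp add: sum_subtractf algebra_simps)
  ultimately show "\<mu> * (norm (a - b))\<^sup>2 \<le> (c *\<^sub>R (\<Sum>k\<in>I. f k a) + \<mu> *\<^sub>R a - (c *\<^sub>R (\<Sum>k\<in>I. f k b) + \<mu> *\<^sub>R b)) \<bullet> (a - b)"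
    by (simp add: inner_add_left inner_sum_left power2_norm_eq_inner)
qed

lemma norm_average_le:
  assumes "1 \<le> n" "\<forall>k\<in>{1..n}. norm (v k) \<le> B"
  shows "norm ((1 / real n) *\<^sub>R (\<Sum>k\<in>{1..n}. v k)) \<le> B"
proof -
  have "norm (\<Sum>k\<in>{1..n}. v k) \<le> real n * B"
    using norm_sum[of v "{1..n}"] sum_mono[of "{1..n}" "\<lambda>k. norm (v k)" "\<lambda>_. B"] assms(2) by simp
  then show ?thesis using assms(1) by (simp add: divide_le_eq mult.commute)
qed

lemma sample_average_operator:
  fixes \<phi> :: "'d::finite \<Rightarrow> 'x \<Rightarrow> real" and dJ :: "'N::finite \<Rightarrow> real^'N \<Rightarrow> 'y \<Rightarrow> real"
  assumes n: "1 \<le> n" and samples: "\<forall>k. xs k \<in> \<X>" "\<forall>k. ys k \<in> \<Y>" and \<mu>: "0 \<le> \<mu>"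
    and lip: "\<forall>y\<in>\<Y>. lipschitz_on L (Zhat \<phi> \<X> R) (\<lambda>z. Fz dJ z y)"
    and mono: "\<forall>y\<in>\<Y>. \<forall>z1\<in>Zhat \<phi> \<X> R. \<forall>z2\<in>Zhat \<phi> \<X> R. (Fz dJ z1 y - Fz dJ z2 y) \<bullet> (z1 - z2) \<ge> 0"
    and B: "\<forall>a\<in>clBN R. \<forall>x\<in>\<X>. \<forall>y\<in>\<Y>. norm (Fb \<phi> dJ a x y) \<le> B"
  defines "G \<equiv> \<lambda>a. (1 / real n) *\<^sub>R (\<Sum>k\<in>{1..n}. Fb \<phi> dJ a (xs k) (ys k)) + \<mu> *\<^sub>R a"
  shows "continuous_on (clBN R) G" "strongly_monotone_on \<mu> (clBN R) G"
    and "\<forall>a\<in>clBN R. norm (G a) \<le> B + \<mu> * (real CARD('N) * R)"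
proof -
  show "continuous_on (clBN R) G" "strongly_monotone_on \<mu> (clBN R) G"
    unfolding G_def using samples lip mono
    by (auto intro!: continuous_intros continuous_on_Fb[where \<X> = \<X>]
        strongly_monotone_on_regularized_sum monotone_Fb[where \<X> = \<X>])
  have "norm ((1 / real n) *\<^sub>R (\<Sum>k\<in>{1..n}. Fb \<phi> dJ a (xs k) (ys k))) \<le> B" if "a \<in> clBN R" for a
    using B samples that by (intro norm_average_le[OF n]) auto
  then show "\<forall>a\<in>clBN R. norm (G a) \<le> B + \<mu> * (real CARD('N) * R)"
    unfolding G_def using \<mu>
    by (auto intro!: norm_triangle_le add_mono mult_left_mono norm_le_of_mem_clBN)
qed

lemma scaled_neg_powr_bounds:
  assumes "1 \<le> n" "0 \<le> \<alpha>" "0 < c"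
  shows "0 < c * real n powr (- \<alpha>)" "c * real n powr (- \<alpha>) \<le> c"
proof -
  have "real n powr (- \<alpha>) \<le> 1" using assms(1,2) powr_mono[of "- \<alpha>" 0 "real n"] by simp
  then show "c * real n powr (- \<alpha>) \<le> c" using assms(3) by (simp add: mult_left_le)
qed (use assms in simp)

lemma unique_solutions_tendsto:
  fixes P :: "nat \<Rightarrow> 'a::real_normed_vector \<Rightarrow> bool"
  assumes ev: "\<forall>\<^sub>F n in sequentially. (\<exists>!a. P n a) \<and> (\<forall>a. P n a \<longrightarrow> norm (a - a\<^sub>0) \<le> r n)"
    and r: "r \<longlonglongrightarrow> 0"
  shows "(\<forall>S. open S \<and> a\<^sub>0 \<in> S \<longrightarrow>
            (\<exists>N::nat. N \<ge> 1 \<and> (\<forall>n\<ge>N. (\<exists>!a. P n a) \<and> (\<forall>a. P n a \<longrightarrow> a \<in> S))))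
         \<and> (\<lambda>n. norm ((THE a. P n a) - a\<^sub>0)) \<longlonglongrightarrow> 0"
proof (intro conjI allI impI)
  fix S assume "open S \<and> a\<^sub>0 \<in> S"
  then obtain \<epsilon> where "\<epsilon> > 0" and ball: "ball a\<^sub>0 \<epsilon> \<subseteq> S" by (meson openE)
  have "\<forall>\<^sub>F n in sequentially. r n < \<epsilon>" using r \<open>\<epsilon> > 0\<close> by (rule order_tendstoD)
  with ev have "\<forall>\<^sub>F n in sequentially. (\<exists>!a. P n a) \<and> (\<forall>a. P n a \<longrightarrow> a \<in> S)"
    by eventually_elim (use ball in \<open>fastforce simp: dist_norm norm_minus_commute\<close>)
  then obtain N where "\<forall>n\<ge>N. (\<exists>!a. P n a) \<and> (\<forall>a. P n a \<longrightarrow> a \<in> S)"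
    unfolding eventually_sequentially by blast
  then show "\<exists>N::nat. N \<ge> 1 \<and> (\<forall>n\<ge>N. (\<exists>!a. P n a) \<and> (\<forall>a. P n a \<longrightarrow> a \<in> S))"
    by (intro exI[of _ "max N 1"]) auto
next
  have "\<forall>\<^sub>F n in sequentially. norm (norm ((THE a. P n a) - a\<^sub>0)) \<le> r n"
    using ev by eventually_elim (simp add: theI')
  then show "(\<lambda>n. norm ((THE a. P n a) - a\<^sub>0)) \<longlonglongrightarrow> 0" using r by (rule Lim_null_comparison)
qed

theorem theorem3:
  fixes M :: "'w measure"
    and X :: "'w \<Rightarrow> 'x::euclidean_space" and Y :: "'w \<Rightarrow> 'y::euclidean_space"
    and Xs :: "nat \<Rightarrow> 'w \<Rightarrow> 'x" and Ys :: "nat \<Rightarrow> 'w \<Rightarrow> 'y"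
    and \<X> :: "'x set" and \<Y> :: "'y set"
    and \<phi> :: "'d::finite \<Rightarrow> 'x \<Rightarrow> real"
    and J :: "'N::finite \<Rightarrow> real^'N \<Rightarrow> 'y \<Rightarrow> real"
    and dJ :: "'N \<Rightarrow> real^'N \<Rightarrow> 'y \<Rightarrow> real"
    and h :: "'N \<Rightarrow> real \<Rightarrow> 'y \<Rightarrow> real"
    and R lam LF Lh eps_h eps_d alpha :: real
    and a_star :: "real^'d^'N"
    and F0 FF hbar Fs hs AA As epsn En Omega_t
  assumes F0_def: "F0 = (\<lambda>a. integral\<^sup>L M (\<lambda>\<omega>. Fb \<phi> dJ a (X \<omega>) (Y \<omega>)))"
    and FF_def: "FF = (\<lambda>a. F0 a + lam *\<^sub>R a)"
    and hbar_def: "hbar = (\<lambda>i c. integral\<^sup>L M (\<lambda>\<omega>. hb \<phi> h i c (X \<omega>) (Y \<omega>)))"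
    and Fs_def: "Fs = (\<lambda>\<omega> n a. (1 / real n) *\<^sub>R (\<Sum>k\<in>{1..n}. Fb \<phi> dJ a (Xs k \<omega>) (Ys k \<omega>)) + lam *\<^sub>R a)"
    and hs_def: "hs = (\<lambda>\<omega> n i c. (1 / real n) * (\<Sum>k\<in>{1..n}. hb \<phi> h i c (Xs k \<omega>) (Ys k \<omega>)))"
    and AA_def: "AA = (\<lambda>e. {a::real^'d^'N. \<forall>i. a$i \<in> cball 0 R \<and> hbar i (a$i) \<le> e})"
    and As_def: "As = (\<lambda>\<omega> n. {a::real^'d^'N. \<forall>i. a$i \<in> cball 0 R \<and> hs \<omega> n i (a$i) \<le> 0})"
    and epsn_def: "epsn = (\<lambda>n::nat. eps_d * real n powr (- alpha))"
    and En_def: "En = (\<lambda>n. {\<omega> \<in> space M. (\<forall>a\<in>clBN R. norm (Fs \<omega> n a - FF a) < epsn n)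
                  \<and> AA (- epsn n) \<subseteq> As \<omega> n \<and> As \<omega> n \<subseteq> AA (epsn n)})"
    and Omega_t_def: "Omega_t = {\<omega> \<in> space M. \<exists>n\<^sub>\<omega>::nat. n\<^sub>\<omega> \<ge> 1 \<and> (\<forall>n>n\<^sub>\<omega>. \<omega> \<in> En n)}"
    and M: "prob_space M"
    and X_rv: "X \<in> borel_measurable M" and Y_rv: "Y \<in> borel_measurable M"
    and X_in: "\<forall>\<omega>\<in>space M. X \<omega> \<in> \<X>" and Y_in: "\<forall>\<omega>\<in>space M. Y \<omega> \<in> \<Y>"
    and cX: "compact \<X>" and cY: "compact \<Y>"
    and phi_cont: "\<forall>l. continuous_on \<X> (\<phi> l)"
    and R_pos: "0 < R" and lam_pos: "0 < lam"
    (* i.i.d. copies *)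
    and Xs_rv: "\<forall>k. Xs k \<in> borel_measurable M" and Ys_rv: "\<forall>k. Ys k \<in> borel_measurable M"
    and Xs_in: "\<forall>k. \<forall>\<omega>\<in>space M. Xs k \<omega> \<in> \<X>" and Ys_in: "\<forall>k. \<forall>\<omega>\<in>space M. Ys k \<omega> \<in> \<Y>"
    and indep: "prob_space.indep_vars M (\<lambda>_. borel) (\<lambda>k \<omega>. (Xs k \<omega>, Ys k \<omega>)) {1..}"
    and ident: "\<forall>k\<ge>1. distr M borel (\<lambda>\<omega>. (Xs k \<omega>, Ys k \<omega>)) = distr M borel (\<lambda>\<omega>. (X \<omega>, Y \<omega>))"
    (* expectations are well defined *)
    and F_int: "\<forall>a\<in>clBN R. integrable M (\<lambda>\<omega>. Fb \<phi> dJ a (X \<omega>) (Y \<omega>))"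
    and h_int: "\<forall>i. \<forall>c\<in>cball 0 R. integrable M (\<lambda>\<omega>. hb \<phi> h i c (X \<omega>) (Y \<omega>))"
    (* (A1) *)
    and A1: "\<forall>i z y. y \<in> \<Y> \<longrightarrow>
               ((\<lambda>t. J i (vupd z i t) y) has_real_derivative dJ i z y) (at (z$i))
             \<and> continuous_on UNIV (\<lambda>t. dJ i (vupd z i t) y)"
    (* (A2) *)
    and A2_F: "\<forall>y\<in>\<Y>. lipschitz_on LF (Zhat \<phi> \<X> R) (\<lambda>z. Fz dJ z y)"
    and A2_h: "\<forall>y\<in>\<Y>. \<forall>i. lipschitz_on Lh (Zhat_i \<phi> \<X> R) (\<lambda>t. h i t y)"
    and A2_bdd: "\<exists>z\<in>Zhat \<phi> \<X> R. bounded ((\<lambda>y. Fz dJ z y) ` \<Y>)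
                   \<and> (\<forall>i. bounded ((\<lambda>y. h i (z$i) y) ` \<Y>))"
    (* (A3) *)
    and A3_F: "\<forall>y\<in>\<Y>. \<forall>z1\<in>Zhat \<phi> \<X> R. \<forall>z2\<in>Zhat \<phi> \<X> R.
                 (Fz dJ z1 y - Fz dJ z2 y) \<bullet> (z1 - z2) \<ge> 0"
    and A3_h: "\<forall>y\<in>\<Y>. \<forall>i. convex_on (Zhat_i \<phi> \<X> R) (\<lambda>t. h i t y)"
    (* (A4) *)
    and eps_h_pos: "0 < eps_h"
    and A4: "\<forall>i. {c \<in> cball 0 R. hbar i c \<le> - eps_h} \<noteq> {}"
    (* the constant eps_diamond *)
    and eps_d: "0 < eps_d" "eps_d < eps_h"
    and rate_F: "\<forall>a\<in>clBN R. \<forall>i l.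
        let W = (\<lambda>\<omega>. (Fb \<phi> dJ a (X \<omega>) (Y \<omega>))$i$l - (F0 a)$i$l) in
        \<forall>u. 0 < u \<and> u \<le> eps_d \<longrightarrow>
          rate_fun M W u \<ge> ereal (u\<^sup>2 / (3 * integral\<^sup>L M (\<lambda>\<omega>. (W \<omega> - integral\<^sup>L M W)\<^sup>2)))"
    and rate_h: "\<forall>a\<in>clBN R. \<forall>i.
        let W = (\<lambda>\<omega>. hb \<phi> h i (a$i) (X \<omega>) (Y \<omega>) - hbar i (a$i)) in
        \<forall>u. 0 < u \<and> u \<le> eps_d \<longrightarrow>
          rate_fun M W u \<ge> ereal (u\<^sup>2 / (3 * integral\<^sup>L M (\<lambda>\<omega>. (W \<omega> - integral\<^sup>L M W)\<^sup>2)))"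
    and alpha: "0 < alpha" "alpha < 1/2"
    (* a_star solves VI(A, F) *)
    and a_star: "isVI (AA 0) FF a_star"
  shows "\<forall>\<omega>\<in>Omega_t.
           (\<forall>S. open S \<and> a_star \<in> S \<longrightarrow>
              (\<exists>N\<^sub>\<omega>::nat. N\<^sub>\<omega> \<ge> 1 \<and> (\<forall>n\<ge>N\<^sub>\<omega>.
                  (\<exists>!a. isVI (As \<omega> n) (Fs \<omega> n) a)
                \<and> (\<forall>a. isVI (As \<omega> n) (Fs \<omega> n) a \<longrightarrow> a \<in> S))))
         \<and> (\<lambda>n. norm ((THE a. isVI (As \<omega> n) (Fs \<omega> n) a) - a_star)) \<longlonglongrightarrow> 0"
proof -
  obtain B where B: "\<forall>a\<in>clBN R. \<forall>x\<in>\<X>. \<forall>y\<in>\<Y>. norm (Fb \<phi> dJ a x y) \<le> B"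
    using bounded_Fb[OF cX phi_cont A2_F] A2_bdd by blast
  obtain s where s: "s \<in> prod_sublevel hbar R (- eps_h)" using prod_sublevel_nonempty A4 by blast
  have hbar_convex: "\<forall>i. convex_on (cball 0 R) (hbar i)"
    unfolding hbar_def using h_int X_in Y_in A3_h
    by (auto intro!: convex_on_integral convex_on_hb[where \<X> = \<X>])
  have AA_eq: "AA = prod_sublevel hbar R" and As_eq: "As \<omega> n = prod_sublevel (hs \<omega> n) R 0" for \<omega> n
    unfolding AA_def As_def prod_sublevel_def by auto
  define C where "C = B + lam * (real CARD('N) * R)"
  define K where "K = 2 * real CARD('N) * R * ((C + norm (FF a_star)) / eps_h + 1)"
  have sample_VI: "(\<exists>!a. isVI (As \<omega> n) (Fs \<omega> n) a)
      \<and> (\<forall>a. isVI (As \<omega> n) (Fs \<omega> n) a \<longrightarrow> norm (a - a_star) \<le> sqrt (epsn n * K / lam))"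
    if \<omega>: "\<omega> \<in> En n" and n: "1 \<le> n" for \<omega> n
  proof -
    have samples: "Xs k \<omega> \<in> \<X>" "Ys k \<omega> \<in> \<Y>" for k
      using \<omega> Xs_in Ys_in unfolding En_def by auto
    have e: "0 < epsn n" "epsn n \<le> eps_h"
      using scaled_neg_powr_bounds[OF n, of alpha eps_d] alpha eps_d unfolding epsn_def by linarith+
    have hs: "\<forall>i. convex_on (cball 0 R) (hs \<omega> n i)" "\<forall>i. continuous_on (cball 0 R) (hs \<omega> n i)"
      unfolding hs_def using samples A2_h A3_h n
      by (auto intro!: convex_on_cmul convex_on_sum_fun convex_on_hb[where \<X> = \<X>]
        continuous_intros continuous_on_hb[where \<X> = \<X>])
    have Fs: "continuous_on (clBN R) (Fs \<omega> n)" "strongly_monotone_on lam (clBN R) (Fs \<omega> n)"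
      "\<forall>a\<in>clBN R. norm (Fs \<omega> n a) \<le> C"
      using sample_average_operator[OF n _ _ _ A2_F A3_F B] samples lam_pos
      unfolding Fs_def C_def by auto
    have sandwich: "prod_sublevel hbar R (- epsn n) \<subseteq> As \<omega> n" "As \<omega> n \<subseteq> prod_sublevel hbar R (epsn n)"
      and close: "norm (Fs \<omega> n a_star - FF a_star) \<le> epsn n"
      using \<omega> a_star prod_sublevel_subset_clBN unfolding En_def AA_eq isVI_def by fastforce+
    have "s \<in> As \<omega> n" using s sandwich(1) prod_sublevel_mono[of "- eps_h" "- epsn n"] e by auto
    then have "\<exists>!a. isVI (As \<omega> n) (Fs \<omega> n) a"
      unfolding As_eq using hs Fs lam_pos by (intro isVI_prod_sublevel_ex1) auto
    moreover have "norm (a - a_star) \<le> sqrt (epsn n * K / lam)" if "isVI (As \<omega> n) (Fs \<omega> n) a" for a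
    proof -
      have "lam * (norm (a - a_star))\<^sup>2 \<le> epsn n * K"
        using isVI_prod_sublevel_perturbation_bound[OF hbar_convex s e sandwich that]
          a_star Fs(2,3) close unfolding AA_eq K_def by (simp add: mult.assoc)
      then show ?thesis using lam_pos by (intro real_le_rsqrt) (simp add: pos_le_divide_eq mult.commute)
    qed
    ultimately show ?thesis by blast
  qed
  have "(\<lambda>n. sqrt (eps_d * real n powr (- alpha) * K / lam)) \<longlonglongrightarrow> sqrt (eps_d * 0 * K / lam)"
    using alpha lam_pos by (intro tendsto_intros tendsto_neg_powr filterlim_real_sequentially) auto
  then have rate: "(\<lambda>n. sqrt (epsn n * K / lam)) \<longlonglongrightarrow> 0" unfolding epsn_def by simp
  show ?thesis
  proof (intro ballI unique_solutions_tendsto[OF _ rate])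
    fix \<omega> assume "\<omega> \<in> Omega_t"
    then obtain n\<^sub>\<omega> where "\<forall>n>n\<^sub>\<omega>. \<omega> \<in> En n" "1 \<le> n\<^sub>\<omega>" unfolding Omega_t_def by auto
    then have "\<forall>\<^sub>F n in sequentially. \<omega> \<in> En n \<and> 1 \<le> n"
      unfolding eventually_sequentially by (intro exI[of _ "Suc n\<^sub>\<omega>"]) auto
    then show "\<forall>\<^sub>F n in sequentially. (\<exists>!a. isVI (As \<omega> n) (Fs \<omega> n) a)
        \<and> (\<forall>a. isVI (As \<omega> n) (Fs \<omega> n) a \<longrightarrow> norm (a - a_star) \<le> sqrt (epsn n * K / lam))"
      by eventually_elim (use sample_VI in blast)
  qed
qed

end
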